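(* There is an adjunction $M \dashv \mathrm{Idem}$ between the category $\mathrm{DLatt}_{lb}$ of lower bounded distributive lattices and the category $\mathrm{CAlg}^{nu}$ of non-unital commutative rings, where the left adjoint sends $D$ to its module of motives $M(D)$ with multiplication $[U]\cdot[V]=[U\wedge V]$, and the right adjoint sends a non-unital commutative ring $R$ to its set of idempotents $\mathrm{Idem}(R)=\{p\in R \mid p^2=p\}$ viewed as a lower bounded distributive lattice with bottom $0$, $p\wedge q = pq$ and $p\vee q = p+q-pq$.
   Context: A lower bounded distributive lattice is a distributive lattice with a bottom element $0$; morphisms in $\mathrm{DLatt}_{lb}$ are lattice homomorphisms preserving $0$. The module of motives $M(D)$ is the free abelian group $\mathbb{Z}[D]$ modulo the relations $[0]=0$ and $[U]+[V]=[U\vee V]+[U\wedge V]$ for all $U,V\in D$. *)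

theory Defs
  imports "HOL-Library.Poly_Mapping"
begin

text \<open>Lower bounded distributive lattices are types of sort {distrib_lattice, order_bot};
  Z[D] is the free abelian group (finitely supported 'a to int), with [U] = single U 1.\<close>

inductive_set motive_rel :: "('a::{distrib_lattice,order_bot} \<Rightarrow>\<^sub>0 int) set" where
  zero: "0 \<in> motive_rel"
| bot: "Poly_Mapping.single bot 1 \<in> motive_rel"
| mv: "Poly_Mapping.single U 1 + Poly_Mapping.single V 1
        - Poly_Mapping.single (sup U V) 1 - Poly_Mapping.single (inf U V) 1 \<in> motive_rel"
| add: "x \<in> motive_rel \<Longrightarrow> y \<in> motive_rel \<Longrightarrow> x + y \<in> motive_rel"
| neg: "x \<in> motive_rel \<Longrightarrow> - x \<in> motive_rel"

definition motive_equiv :: "(('a::{distrib_lattice,order_bot} \<Rightarrow>\<^sub>0 int) \<times> ('a \<Rightarrow>\<^sub>0 int)) set" where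
  "motive_equiv = {(x, y). x - y \<in> motive_rel}"

typedef (overloaded) ('a::"{distrib_lattice,order_bot}") motive = "(UNIV :: ('a \<Rightarrow>\<^sub>0 int) set) // motive_equiv"
  by (auto simp: quotient_def)

definition abs_motive :: "('a::{distrib_lattice,order_bot} \<Rightarrow>\<^sub>0 int) \<Rightarrow> 'a motive" where
  "abs_motive x = Abs_motive (motive_equiv `` {x})"

definition rep_motive :: "'a::{distrib_lattice,order_bot} motive \<Rightarrow> ('a \<Rightarrow>\<^sub>0 int)" where
  "rep_motive a = (SOME x. x \<in> Rep_motive a)"

definition motive_cls :: "'a::{distrib_lattice,order_bot} \<Rightarrow> 'a motive" where
  "motive_cls U = abs_motive (Poly_Mapping.single U 1)"

definition motive_zero :: "'a::{distrib_lattice,order_bot} motive" where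
  "motive_zero = abs_motive 0"

definition motive_plus :: "'a::{distrib_lattice,order_bot} motive \<Rightarrow> 'a motive \<Rightarrow> 'a motive" where
  "motive_plus a b = abs_motive (rep_motive a + rep_motive b)"

definition motive_uminus :: "'a::{distrib_lattice,order_bot} motive \<Rightarrow> 'a motive" where
  "motive_uminus a = abs_motive (- rep_motive a)"

definition motive_minus :: "'a::{distrib_lattice,order_bot} motive \<Rightarrow> 'a motive \<Rightarrow> 'a motive" where
  "motive_minus a b = abs_motive (rep_motive a - rep_motive b)"

text \<open>Bilinear extension of [U]*[V] = [inf U V] on Z[D].\<close>
definition free_motive_prod :: "('a::{distrib_lattice,order_bot} \<Rightarrow>\<^sub>0 int) \<Rightarrow> ('a \<Rightarrow>\<^sub>0 int) \<Rightarrow> ('a \<Rightarrow>\<^sub>0 int)" where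
  "free_motive_prod x y = (\<Sum>U\<in>Poly_Mapping.keys x. \<Sum>V\<in>Poly_Mapping.keys y.
      Poly_Mapping.single (inf U V) (Poly_Mapping.lookup x U * Poly_Mapping.lookup y V))"

definition motive_times :: "'a::{distrib_lattice,order_bot} motive \<Rightarrow> 'a motive \<Rightarrow> 'a motive" where
  "motive_times a b = abs_motive (free_motive_prod (rep_motive a) (rep_motive b))"

text \<open>Idempotents of a non-unital commutative ring (class comm_ring has no unit).\<close>
definition Idem :: "'r::comm_ring set" where
  "Idem = {p. p * p = p}"

definition lb_distrib_lattice_on :: "'b set \<Rightarrow> ('b \<Rightarrow> 'b \<Rightarrow> 'b) \<Rightarrow> ('b \<Rightarrow> 'b \<Rightarrow> 'b) \<Rightarrow> 'b \<Rightarrow> bool" where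
  "lb_distrib_lattice_on S meet join z \<longleftrightarrow>
     z \<in> S \<and> (\<forall>x\<in>S. \<forall>y\<in>S. meet x y \<in> S \<and> join x y \<in> S) \<and>
     (\<forall>x\<in>S. \<forall>y\<in>S. meet x y = meet y x \<and> join x y = join y x) \<and>
     (\<forall>x\<in>S. \<forall>y\<in>S. \<forall>w\<in>S. meet (meet x y) w = meet x (meet y w) \<and> join (join x y) w = join x (join y w)) \<and>
     (\<forall>x\<in>S. \<forall>y\<in>S. meet x (join x y) = x \<and> join x (meet x y) = x) \<and>
     (\<forall>x\<in>S. \<forall>y\<in>S. \<forall>w\<in>S. meet x (join y w) = join (meet x y) (meet x w)) \<and>
     (\<forall>x\<in>S. meet z x = z)"

definition idem_meet :: "'r::comm_ring \<Rightarrow> 'r \<Rightarrow> 'r" where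
  "idem_meet p q = p * q"

definition idem_join :: "'r::comm_ring \<Rightarrow> 'r \<Rightarrow> 'r" where
  "idem_join p q = p + q - p * q"

definition lat_hom_to_Idem :: "('a::{distrib_lattice,order_bot} \<Rightarrow> 'r::comm_ring) \<Rightarrow> bool" where
  "lat_hom_to_Idem f \<longleftrightarrow> (\<forall>U. f U \<in> Idem) \<and> f bot = 0 \<and>
     (\<forall>U V. f (inf U V) = idem_meet (f U) (f V) \<and> f (sup U V) = idem_join (f U) (f V))"

definition motive_ring_hom :: "('a::{distrib_lattice,order_bot} motive \<Rightarrow> 'r::comm_ring) \<Rightarrow> bool" where
  "motive_ring_hom \<phi> \<longleftrightarrow> (\<forall>a b. \<phi> (motive_plus a b) = \<phi> a + \<phi> b \<and> \<phi> (motive_times a b) = \<phi> a * \<phi> b)"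

end

theory Submission
  imports Defs HOL.Modules
begin

text \<open>
  The bilinear extension of \<open>\<sqinter>\<close> to \<open>\<int>[D]\<close> is associative and commutative, and the
  relations of \<open>M(D)\<close> span an ideal for it (multiplying a relation by \<open>[W]\<close> gives the
  relation for \<open>U \<sqinter> W, V \<sqinter> W\<close> by distributivity), so \<open>M(D)\<close> is a commutative ring in which every
  \<open>[U]\<close> is idempotent and \<open>[U \<squnion> V] = [U] + [V] - [U][V]\<close>. Conversely, a lattice map
  \<open>f : D \<rightarrow> Idem(R)\<close> extends additively to \<open>\<int>[D]\<close>; the extension is multiplicative because \<open>f\<close>
  preserves meets, and it kills the relations because \<open>f\<close> preserves \<open>0\<close> and joins, so it
  descends to \<open>M(D)\<close>. It is unique because the \<open>[U]\<close> generate \<open>M(D)\<close> as an abelian group.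
\<close>

text \<open>\<open>R\<close> need not have a unit, so integer coefficients act through the \<open>\<int>\<close>-module structure
  of the underlying abelian group rather than through \<^const>\<open>of_int\<close>.\<close>

definition int_smult :: "int \<Rightarrow> 'a::ab_group_add \<Rightarrow> 'a" where
  "int_smult k x = (\<Sum>_<nat k. x) - (\<Sum>_<nat (- k). x)"

lemma sum_const_lessThan_add:
  fixes x :: "'a::comm_monoid_add" and m n :: nat
  shows "(\<Sum>_<m + n. x) = (\<Sum>_<m. x) + (\<Sum>_<n. x)"
  by (induction n) (simp_all add: add.assoc)

lemma int_smult_of_nat_diff: "int_smult (int m - int n) x = (\<Sum>_<m. x) - (\<Sum>_<n. x)"
proof (cases "n \<le> m")
  case True
  then obtain d where "m = n + d" by (metis le_add_diff_inverse)
  then show ?thesis by (simp add: int_smult_def sum_const_lessThan_add)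
next
  case False
  then obtain d where "n = m + d" by (metis le_add_diff_inverse nat_le_linear)
  then show ?thesis by (simp add: int_smult_def sum_const_lessThan_add)
qed

lemma int_smult_add: "int_smult (k + l) x = int_smult k x + int_smult l x"
proof -
  obtain a b c d where "k = int a - int b" "l = int c - int d" by (metis int_diff_cases)
  then have "k + l = int (a + c) - int (b + d)" by simp
  then show ?thesis
    by (simp only: \<open>k = _\<close> \<open>l = _\<close> int_smult_of_nat_diff sum_const_lessThan_add) (simp add: algebra_simps)
qed

lemma int_smult_1 [simp]: "int_smult 1 x = x"
  by (simp add: int_smult_def)

lemma additive_frag_eqI:
  assumes "additive F" "additive G" "\<And>U. F (frag_of U) = G (frag_of U)"
  shows "F x = G x"
  using subset_UNIV
  by (induction x rule: frag_induction) (simp_all add: assms additive.zero additive.diff)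

lemma additive_compose: "additive f \<Longrightarrow> additive g \<Longrightarrow> additive (\<lambda>x. f (g x))"
  by (simp add: additive_def)

definition frag_eval :: "('a \<Rightarrow> 'b::ab_group_add) \<Rightarrow> ('a \<Rightarrow>\<^sub>0 int) \<Rightarrow> 'b" where
  "frag_eval f x = (\<Sum>U\<in>Poly_Mapping.keys x. int_smult (Poly_Mapping.lookup x U) (f U))"

lemma frag_eval_sum_superset:
  assumes "finite A" "Poly_Mapping.keys x \<subseteq> A"
  shows "frag_eval f x = (\<Sum>U\<in>A. int_smult (Poly_Mapping.lookup x U) (f U))"
  unfolding frag_eval_def
  by (rule sum.mono_neutral_left) (auto simp: assms in_keys_iff int_smult_def)

lemma additive_frag_eval: "additive (frag_eval f)"
proof
  fix x y :: "'a \<Rightarrow>\<^sub>0 int"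
  let ?A = "Poly_Mapping.keys x \<union> Poly_Mapping.keys y"
  have "frag_eval f (x + y) = (\<Sum>U\<in>?A. int_smult (Poly_Mapping.lookup (x + y) U) (f U))"
    by (rule frag_eval_sum_superset) (use keys_add[of x y] in auto)
  also have "\<dots> = (\<Sum>U\<in>?A. int_smult (Poly_Mapping.lookup x U) (f U))
                  + (\<Sum>U\<in>?A. int_smult (Poly_Mapping.lookup y U) (f U))"
    by (simp add: lookup_add int_smult_add sum.distrib)
  also have "\<dots> = frag_eval f x + frag_eval f y"
    by (simp add: frag_eval_sum_superset[of ?A])
  finally show "frag_eval f (x + y) = frag_eval f x + frag_eval f y" .
qed

lemma frag_eval_frag_of [simp]: "frag_eval f (frag_of U) = f U"
  by (simp add: frag_eval_def)

lemma bilinear_frag_eqI: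
  assumes "\<And>y. additive (\<lambda>x. F x y)" "\<And>x. additive (F x)"
    and "\<And>y. additive (\<lambda>x. G x y)" "\<And>x. additive (G x)"
    and "\<And>U V. F (frag_of U) (frag_of V) = G (frag_of U) (frag_of V)"
  shows "F x y = G x y"
proof -
  have "F (frag_of U) y = G (frag_of U) y" for U
    by (rule additive_frag_eqI[of "F (frag_of U)" "G (frag_of U)"]) (simp_all add: assms)
  then show ?thesis
    by (rule additive_frag_eqI[of "\<lambda>x. F x y" "\<lambda>x. G x y", rotated 2]) (simp_all add: assms)
qed

lemma additive_frag_extend: "additive (frag_extend f)"
  by (rule additive.intro) (rule frag_extend_add)

lemma frag_extend_add_fun: "frag_extend (\<lambda>i. f i + g i) x = frag_extend f x + frag_extend g x"
  by (rule additive_frag_eqI[of "frag_extend (\<lambda>i. f i + g i)" "\<lambda>x. frag_extend f x + frag_extend g x"])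
    (simp_all add: additive_frag_extend additive_def frag_extend_add)

lemma free_motive_prod_eq_frag_extend:
  "free_motive_prod x y = frag_extend (\<lambda>U. frag_extend (\<lambda>V. frag_of (inf U V)) y) x"
proof -
  have "frag_cmul c (Poly_Mapping.single W d) = Poly_Mapping.single W (c * d)" for c d and W :: 'a
    by (rule poly_mapping_eqI) (simp add: lookup_single when_def)
  then show ?thesis
    unfolding free_motive_prod_def frag_extend_def by (simp add: frag_cmul_sum)
qed

lemma additive_free_motive_prod_left: "additive (\<lambda>x. free_motive_prod x y)"
  by (simp add: free_motive_prod_eq_frag_extend additive_frag_extend)

lemma additive_free_motive_prod_right: "additive (free_motive_prod x)"
  by (rule additive.intro)
    (simp add: free_motive_prod_eq_frag_extend frag_extend_add frag_extend_add_fun)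

lemma free_motive_prod_frag_of [simp]:
  "free_motive_prod (frag_of U) (frag_of V) = frag_of (inf U V)"
  by (simp add: free_motive_prod_eq_frag_extend)

lemma free_motive_prod_commute: "free_motive_prod x y = free_motive_prod y x"
  by (rule bilinear_frag_eqI[where G = "\<lambda>x y. free_motive_prod y x"])
    (simp_all add: additive_free_motive_prod_left additive_free_motive_prod_right inf_commute)

lemma free_motive_prod_assoc:
  "free_motive_prod (free_motive_prod x y) z = free_motive_prod x (free_motive_prod y z)"
proof (rule bilinear_frag_eqI[where F = "\<lambda>x y. free_motive_prod (free_motive_prod x y) z"])
  fix U V
  have "free_motive_prod (frag_of (inf U V)) z
      = free_motive_prod (frag_of U) (free_motive_prod (frag_of V) z)"
    by (rule additive_frag_eqI[of "free_motive_prod (frag_of (inf U V))"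
          "\<lambda>z. free_motive_prod (frag_of U) (free_motive_prod (frag_of V) z)"])
      (simp_all add: additive_free_motive_prod_right inf_assoc
        additive_compose[OF additive_free_motive_prod_right additive_free_motive_prod_right])
  then show "free_motive_prod (free_motive_prod (frag_of U) (frag_of V)) z
      = free_motive_prod (frag_of U) (free_motive_prod (frag_of V) z)"
    by simp
qed (simp_all add: additive_free_motive_prod_left additive_free_motive_prod_right
    additive_compose[OF additive_free_motive_prod_left additive_free_motive_prod_left]
    additive_compose[OF additive_free_motive_prod_left additive_free_motive_prod_right]
    additive_compose[OF additive_free_motive_prod_right additive_free_motive_prod_left])

lemma motive_rel_diff: "x \<in> motive_rel \<Longrightarrow> y \<in> motive_rel \<Longrightarrow> x - y \<in> motive_rel"
  using motive_rel.add[OF _ motive_rel.neg, of x y] by simp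

lemma additive_into_motive_rel:
  assumes "additive g" "\<And>U. g (frag_of U) \<in> motive_rel"
  shows "g z \<in> motive_rel"
  using subset_UNIV
  by (induction z rule: frag_induction)
    (simp_all add: assms additive.zero additive.diff motive_rel.zero motive_rel_diff)

lemma free_motive_prod_motive_rel: "r \<in> motive_rel \<Longrightarrow> free_motive_prod r z \<in> motive_rel"
proof (induction r rule: motive_rel.induct)
  case bot
  show ?case
    by (rule additive_into_motive_rel[OF additive_free_motive_prod_right])
      (simp add: inf_absorb1 motive_rel.bot)
next
  case (mv U V)
  have "inf (inf U V) W = inf (inf U W) (inf V W)" for W
    by (metis inf.left_idem inf_assoc inf_commute)
  then have relator_times:
    "free_motive_prod (frag_of U + frag_of V - frag_of (sup U V) - frag_of (inf U V)) (frag_of W)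
      = frag_of (inf U W) + frag_of (inf V W) - frag_of (sup (inf U W) (inf V W))
        - frag_of (inf (inf U W) (inf V W))" for W
    by (simp add: additive.diff[OF additive_free_motive_prod_left]
        additive.add[OF additive_free_motive_prod_left] inf_sup_distrib2)
  show ?case
    by (rule additive_into_motive_rel[OF additive_free_motive_prod_right])
      (simp only: relator_times motive_rel.mv)
qed (simp_all add: motive_rel.zero motive_rel.add motive_rel.neg
    additive.zero[OF additive_free_motive_prod_left] additive.add[OF additive_free_motive_prod_left] additive.minus[OF additive_free_motive_prod_left])

lemma equiv_motive_equiv: "equiv UNIV motive_equiv"
proof (rule equivI)
  show "refl motive_equiv"
    by (rule reflI) (simp add: motive_equiv_def motive_rel.zero)
  show "sym motive_equiv"
    by (rule symI) (metis motive_equiv_def case_prodD case_prodI mem_Collect_eq minus_diff_eq motive_rel.neg)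
  show "trans motive_equiv"
  proof (rule transI)
    fix x y z
    assume "(x, y) \<in> motive_equiv" "(y, z) \<in> motive_equiv"
    then have "(x - y) + (y - z) \<in> motive_rel"
      by (intro motive_rel.add) (simp_all add: motive_equiv_def)
    then show "(x, z) \<in> motive_equiv"
      by (simp add: motive_equiv_def)
  qed
qed auto

lemma abs_motive_eq_iff: "abs_motive x = abs_motive y \<longleftrightarrow> x - y \<in> motive_rel"
proof -
  have "abs_motive x = abs_motive y \<longleftrightarrow> motive_equiv `` {x} = motive_equiv `` {y}"
    unfolding abs_motive_def by (rule Abs_motive_inject) (auto intro: quotientI)
  also have "\<dots> \<longleftrightarrow> (x, y) \<in> motive_equiv"
    by (rule eq_equiv_class_iff[OF equiv_motive_equiv]) auto
  finally show ?thesis by (simp add: motive_equiv_def)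
qed

lemma abs_motive_rep_motive [simp]: "abs_motive (rep_motive a) = a"
proof -
  obtain x where x: "Rep_motive a = motive_equiv `` {x}"
    using Rep_motive[of a] by (auto elim: quotientE)
  then have "x \<in> Rep_motive a"
    by (simp add: motive_equiv_def motive_rel.zero)
  then have "rep_motive a \<in> Rep_motive a"
    unfolding rep_motive_def by (rule someI)
  then have "Rep_motive a = motive_equiv `` {rep_motive a}"
    using x equiv_class_eq[OF equiv_motive_equiv] by simp
  then show ?thesis
    unfolding abs_motive_def by (metis Rep_motive_inverse)
qed

lemma rep_motive_abs_motive: "rep_motive (abs_motive x) - x \<in> motive_rel"
  using abs_motive_eq_iff abs_motive_rep_motive by blast

lemma abs_motive_cases: obtains x where "a = abs_motive x"
  by (metis abs_motive_rep_motive)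

lemma motive_plus_abs [simp]: "motive_plus (abs_motive x) (abs_motive y) = abs_motive (x + y)"
  unfolding motive_plus_def abs_motive_eq_iff
  using motive_rel.add[OF rep_motive_abs_motive[of x] rep_motive_abs_motive[of y]]
  by (simp add: algebra_simps)

lemma motive_uminus_abs [simp]: "motive_uminus (abs_motive x) = abs_motive (- x)"
  unfolding motive_uminus_def abs_motive_eq_iff
  using motive_rel.neg[OF rep_motive_abs_motive[of x]] by (simp add: algebra_simps)

lemma motive_minus_abs [simp]: "motive_minus (abs_motive x) (abs_motive y) = abs_motive (x - y)"
  unfolding motive_minus_def abs_motive_eq_iff
  using motive_rel_diff[OF rep_motive_abs_motive[of x] rep_motive_abs_motive[of y]]
  by (simp add: algebra_simps)

lemma motive_times_abs [simp]:
  "motive_times (abs_motive x) (abs_motive y) = abs_motive (free_motive_prod x y)"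
proof -
  let ?x = "rep_motive (abs_motive x)" and ?y = "rep_motive (abs_motive y)"
  have "free_motive_prod ?x ?y - free_motive_prod x y
      = free_motive_prod (?x - x) ?y + free_motive_prod (?y - y) x"
    by (simp add: additive.diff[OF additive_free_motive_prod_left]
        additive.diff[OF additive_free_motive_prod_right] free_motive_prod_commute[of x])
  also have "\<dots> \<in> motive_rel"
    by (intro motive_rel.add free_motive_prod_motive_rel rep_motive_abs_motive)
  finally show ?thesis
    unfolding motive_times_def abs_motive_eq_iff .
qed

lemma comm_ring_motive:
  "class.comm_ring motive_plus motive_zero motive_minus motive_uminus motive_times"
proof unfold_locales
  fix a b c :: "'a motive"
  obtain x y z where abs: "a = abs_motive x" "b = abs_motive y" "c = abs_motive z"
    by (metis abs_motive_cases)
  then show "motive_times a b = motive_times b a"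
    by (simp add: free_motive_prod_commute)
  from abs show "motive_plus (motive_plus a b) c = motive_plus a (motive_plus b c)"
    and "motive_plus a b = motive_plus b a"
    and "motive_plus motive_zero a = a"
    and "motive_plus (motive_uminus a) a = motive_zero"
    and "motive_minus a b = motive_plus a (motive_uminus b)"
    and "motive_times (motive_times a b) c = motive_times a (motive_times b c)"
    and "motive_times (motive_plus a b) c = motive_plus (motive_times a c) (motive_times b c)"
    by (simp_all add: motive_zero_def add_ac free_motive_prod_assoc
        additive.add[OF additive_free_motive_prod_left])
qed

lemma motive_cls_inf: "motive_times (motive_cls U) (motive_cls V) = motive_cls (inf U V)"
  by (simp add: motive_cls_def)

lemma motive_cls_bot: "motive_cls bot = motive_zero"
  by (simp add: motive_cls_def motive_zero_def abs_motive_eq_iff motive_rel.bot)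

lemma motive_cls_sup:
  "motive_cls (sup U V) =
     motive_minus (motive_plus (motive_cls U) (motive_cls V)) (motive_times (motive_cls U) (motive_cls V))"
proof -
  have "frag_of (sup U V) - (frag_of U + frag_of V - frag_of (inf U V))
      = - (frag_of U + frag_of V - frag_of (sup U V) - frag_of (inf U V))"
    by (simp add: algebra_simps)
  also have "\<dots> \<in> motive_rel"
    by (intro motive_rel.neg motive_rel.mv)
  finally show ?thesis
    by (simp add: motive_cls_def abs_motive_eq_iff)
qed

lemma lb_distrib_lattice_on_Idem: "lb_distrib_lattice_on Idem idem_meet idem_join 0"
  unfolding lb_distrib_lattice_on_def Idem_def idem_meet_def idem_join_def
  by (auto simp: algebra_simps) (simp_all add: mult.assoc[symmetric])

lemma frag_eval_free_motive_prod:
  fixes f :: "'a::{distrib_lattice,order_bot} \<Rightarrow> 'r::comm_ring"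
  assumes "\<And>U V. f (inf U V) = f U * f V"
  shows "frag_eval f (free_motive_prod x y) = frag_eval f x * frag_eval f y"
  by (rule bilinear_frag_eqI[where F = "\<lambda>x y. frag_eval f (free_motive_prod x y)"
        and G = "\<lambda>x y. frag_eval f x * frag_eval f y"])
    (auto intro!: additive.intro simp: assms algebra_simps additive.add[OF additive_frag_eval]
      additive.add[OF additive_free_motive_prod_left] additive.add[OF additive_free_motive_prod_right])

lemma frag_eval_motive_rel:
  assumes "lat_hom_to_Idem f" "r \<in> motive_rel"
  shows "frag_eval f r = 0"
  using assms(2)
proof (induction r rule: motive_rel.induct)
  case (mv U V)
  with assms(1) show ?case
    by (simp add: additive.diff[OF additive_frag_eval] additive.add[OF additive_frag_eval]
        lat_hom_to_Idem_def idem_meet_def idem_join_def)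
qed (use assms(1) in \<open>simp_all add: lat_hom_to_Idem_def additive.zero[OF additive_frag_eval]
      additive.add[OF additive_frag_eval] additive.minus[OF additive_frag_eval]\<close>)

lemma motive_universal:
  fixes f :: "'a::{distrib_lattice,order_bot} \<Rightarrow> 'r::comm_ring"
  assumes f: "lat_hom_to_Idem f"
  shows "\<exists>!\<phi> :: 'a motive \<Rightarrow> 'r. motive_ring_hom \<phi> \<and> (\<forall>U. \<phi> (motive_cls U) = f U)"
proof
  let ?\<phi> = "\<lambda>a. frag_eval f (rep_motive a)"
  have \<phi>_abs: "?\<phi> (abs_motive x) = frag_eval f x" for x
    using frag_eval_motive_rel[OF f rep_motive_abs_motive[of x]]
    by (simp add: additive.diff[OF additive_frag_eval])
  have "f (inf U V) = f U * f V" for U V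
    using f by (simp add: lat_hom_to_Idem_def idem_meet_def)
  then show "motive_ring_hom ?\<phi> \<and> (\<forall>U. ?\<phi> (motive_cls U) = f U)"
    unfolding motive_ring_hom_def motive_plus_def motive_times_def motive_cls_def
    by (simp add: \<phi>_abs additive.add[OF additive_frag_eval] frag_eval_free_motive_prod)
next
  fix \<psi> :: "'a motive \<Rightarrow> 'r"
  assume \<psi>: "motive_ring_hom \<psi> \<and> (\<forall>U. \<psi> (motive_cls U) = f U)"
  have "\<psi> (abs_motive x) = frag_eval f x" for x
  proof (rule additive_frag_eqI[of "\<lambda>x. \<psi> (abs_motive x)"])
    show "additive (\<lambda>x. \<psi> (abs_motive x))"
      using \<psi> by (intro additive.intro) (metis motive_plus_abs motive_ring_hom_def)
  qed (use \<psi> in \<open>simp_all add: additive_frag_eval motive_cls_def\<close>)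
  then show "\<psi> = (\<lambda>a. frag_eval f (rep_motive a))"
    by (metis abs_motive_rep_motive)
qed

theorem theorem3p38:
  fixes D_witness :: "'a::{distrib_lattice,order_bot} itself"
    and R_witness :: "'r::comm_ring itself"
  shows "class.comm_ring motive_plus motive_zero motive_minus motive_uminus motive_times
           \<and> (\<forall>U V::'a. motive_times (motive_cls U) (motive_cls V) = motive_cls (inf U V))
           \<and> lb_distrib_lattice_on (Idem :: 'r set) idem_meet idem_join 0
           \<and> (\<forall>U::'a. motive_cls U \<in> {p. motive_times p p = p})
           \<and> motive_cls (bot::'a) = motive_zero
           \<and> (\<forall>U V::'a. motive_cls (sup U V) =
                 motive_minus (motive_plus (motive_cls U) (motive_cls V)) (motive_times (motive_cls U) (motive_cls V)))
           \<and> (\<forall>f :: 'a \<Rightarrow> 'r. lat_hom_to_Idem f \<longrightarrow>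
                 (\<exists>!\<phi> :: 'a motive \<Rightarrow> 'r. motive_ring_hom \<phi> \<and> (\<forall>U. \<phi> (motive_cls U) = f U)))"
  by (simp add: comm_ring_motive motive_cls_inf lb_distrib_lattice_on_Idem motive_cls_bot
      motive_cls_sup motive_universal)

end
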